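(* Let $R\ge1$, $\mathbf{x}$ a vector of pairwise distinct reals, $\mathbf{c}\in\mathbb{R}^R$, $B=B(\mathbf{x},\mathbf{c})$, $1\le n\le R$, and $k$ a positive integer. Let $B_{-n}$ denote the matrix obtained from $B$ by deleting its $n$-th row and $n$-th column, with rows and columns still indexed by $\{1,\dots,R\}\setminus\{n\}$. Then $$\sum_{\substack{1\le l,m\le R\\ l\ne n,\ m\ne n,\ l\ne m}} b_{n,l}\,b_{m,n}\,(B_{-n}^k)_{l,m}=0.$$ Equivalently, for every $k\ge1$ the off-diagonal entries of $B_{-n}^k$ satisfy this weighted vanishing relation.
   Context: For pairwise distinct reals $x_1,\dots,x_R$ and reals $c_1,\dots,c_R$, $B=B(\mathbf{x},\mathbf{c})$ is the $R\times R$ matrix with entries $b_{m,m}=0$ and $b_{m,n}=\frac{c_mc_n}{x_m-x_n}$ for $m\ne n$. *)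

theory Defs
  imports Complex_Main
begin

text \<open>Matrices over an index set are represented as functions nat => nat => real;
  only entries with both indices in the index set are meaningful.\<close>

definition Bmat :: "(nat \<Rightarrow> real) \<Rightarrow> (nat \<Rightarrow> real) \<Rightarrow> nat \<Rightarrow> nat \<Rightarrow> real" where
  "Bmat x c m n = (if m = n then 0 else c m * c n / (x m - x n))"

fun mat_pow_on :: "nat set \<Rightarrow> (nat \<Rightarrow> nat \<Rightarrow> real) \<Rightarrow> nat \<Rightarrow> nat \<Rightarrow> nat \<Rightarrow> real" where
  "mat_pow_on S M 0 i j = (if i = j then 1 else 0)"
| "mat_pow_on S M (Suc k) i j = (\<Sum>l\<in>S. mat_pow_on S M k i l * M l j)"

end

theory Submission
  imports Defs
begin

text \<open>Put \<open>u l = c n / (x n - x l)\<close>. Partial fractions give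
  \<open>b(n,l) b(m,n) = c n (u m - u l) b(l,m)\<close> for distinct \<open>l, m \<noteq> n\<close>, so the sum equals
  \<open>c n\<close> times \<open>\<Sum>l m. (u m - u l) b(l,m) P(l,m)\<close> with \<open>P\<close> the \<open>k\<close>-th power of the
  minor. As the minor is antisymmetric, \<open>\<Sum>l. b(l,m) P(l,m)\<close> and \<open>\<Sum>m. b(l,m) P(l,m)\<close> are
  minus diagonal entries of the \<open>(k+1)\<close>-st power, so the two halves of the weighted sum
  cancel.\<close>

lemma Bmat_antisym: "Bmat x c l m = - Bmat x c m l"
proof (cases "l = m")
  case False
  have "x l - x m = - (x m - x l)" by simp
  then show ?thesis
    using False by (simp add: Bmat_def minus_divide_right mult.commute)
qed (simp add: Bmat_def)

lemma Bmat_mult_Bmat_eq: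
  assumes "x n \<noteq> x l" and "x n \<noteq> x m" and "x l \<noteq> x m"
  shows "Bmat x c n l * Bmat x c m n
           = c n * (c n / (x n - x m) - c n / (x n - x l)) * Bmat x c l m"
proof -
  have "n \<noteq> l" "m \<noteq> n" "l \<noteq> m" using assms by auto
  moreover have "x n - x l \<noteq> 0" "x n - x m \<noteq> 0" "x l - x m \<noteq> 0" "x m - x n \<noteq> 0"
    using assms by auto
  ultimately show ?thesis
    unfolding Bmat_def by (simp add: divide_simps) (simp add: algebra_simps)
qed

lemma mat_pow_on_Suc_left:
  assumes "finite S" and "i \<in> S" and "j \<in> S"
  shows "mat_pow_on S M (Suc k) i j = (\<Sum>l\<in>S. M i l * mat_pow_on S M k l j)"
  using assms(3)
proof (induction k arbitrary: j)
  case 0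
  have "(\<Sum>l\<in>S. (if i = l then 1 else 0) * M l j) = (\<Sum>l\<in>S. if i = l then M l j else 0)"
    "(\<Sum>l\<in>S. M i l * (if l = j then 1 else 0)) = (\<Sum>l\<in>S. if l = j then M i l else 0)"
    by (auto intro: sum.cong)
  then show ?case using assms(1,2) 0 by simp
next
  case (Suc k)
  have "mat_pow_on S M (Suc (Suc k)) i j
          = (\<Sum>l\<in>S. (\<Sum>p\<in>S. M i p * mat_pow_on S M k p l) * M l j)"
    using Suc by simp
  also have "\<dots> = (\<Sum>l\<in>S. \<Sum>p\<in>S. M i p * (mat_pow_on S M k p l * M l j))"
    by (simp add: sum_distrib_right mult.assoc)
  also have "\<dots> = (\<Sum>p\<in>S. \<Sum>l\<in>S. M i p * (mat_pow_on S M k p l * M l j))"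
    by (rule sum.swap)
  also have "\<dots> = (\<Sum>p\<in>S. M i p * mat_pow_on S M (Suc k) p j)"
    by (simp add: sum_distrib_left)
  finally show ?case .
qed

lemma sum_weighted_antisym_mat_pow_on_eq_0:
  assumes "finite S" and antisym: "\<And>l m. M l m = - M m l"
  shows "(\<Sum>l\<in>S. \<Sum>m\<in>S. (u m - u l) * (M l m * mat_pow_on S M k l m)) = 0"
proof -
  let ?P = "mat_pow_on S M k" and ?D = "\<lambda>i. mat_pow_on S M (Suc k) i i"
  have col: "(\<Sum>l\<in>S. M l m * ?P l m) = - ?D m" if "m \<in> S" for m
  proof -
    have "(\<Sum>l\<in>S. M l m * ?P l m) = - (\<Sum>l\<in>S. M m l * ?P l m)"
      by (simp add: antisym[of _ m] sum_negf)
    then show ?thesis using mat_pow_on_Suc_left[OF assms(1) that that] by simp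
  qed
  have row: "(\<Sum>m\<in>S. M l m * ?P l m) = - ?D l" for l
    by (simp add: antisym[of l] sum_negf mult.commute)
  have "(\<Sum>l\<in>S. \<Sum>m\<in>S. (u m - u l) * (M l m * ?P l m))
          = (\<Sum>m\<in>S. u m * (\<Sum>l\<in>S. M l m * ?P l m)) - (\<Sum>l\<in>S. u l * (\<Sum>m\<in>S. M l m * ?P l m))"
  proof -
    have "(\<Sum>l\<in>S. \<Sum>m\<in>S. u m * (M l m * ?P l m)) = (\<Sum>m\<in>S. u m * (\<Sum>l\<in>S. M l m * ?P l m))"
      unfolding sum_distrib_left by (rule sum.swap)
    then show ?thesis
      by (simp add: left_diff_distrib sum_subtractf sum_distrib_left)
  qed
  also have "\<dots> = (\<Sum>m\<in>S. u m * - ?D m) - (\<Sum>l\<in>S. u l * - ?D l)"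
    using col row by simp
  finally show ?thesis by simp
qed

theorem lemma1:
  fixes R n k :: nat and x c :: "nat \<Rightarrow> real"
  assumes "R \<ge> 1"
    and "inj_on x {1..R}"
    and "1 \<le> n" and "n \<le> R"
    and "k \<ge> 1"
  shows "(\<Sum>l\<in>{1..R} - {n}. \<Sum>m\<in>{1..R} - {n}.
           (if l \<noteq> m then Bmat x c n l * Bmat x c m n
              * mat_pow_on ({1..R} - {n}) (Bmat x c) k l m else 0)) = 0"
proof -
  define S where "S = {1..R} - {n}"
  define u where "u l = c n / (x n - x l)" for l
  let ?P = "mat_pow_on S (Bmat x c) k"
  have "(if l \<noteq> m then Bmat x c n l * Bmat x c m n * ?P l m else 0)
          = c n * ((u m - u l) * (Bmat x c l m * ?P l m))" if "l \<in> S" "m \<in> S" for l m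
  proof (cases "l = m")
    case False
    moreover have "n \<in> {1..R}" "l \<in> {1..R}" "m \<in> {1..R}" "l \<noteq> n" "m \<noteq> n"
      using that assms(3,4) by (auto simp: S_def)
    ultimately have "x n \<noteq> x l" "x n \<noteq> x m" "x l \<noteq> x m"
      by (auto simp: inj_on_eq_iff[OF assms(2)])
    then show ?thesis
      using False by (simp add: Bmat_mult_Bmat_eq u_def)
  qed (simp add: Bmat_def)
  then have "(\<Sum>l\<in>S. \<Sum>m\<in>S. (if l \<noteq> m then Bmat x c n l * Bmat x c m n * ?P l m else 0))
               = c n * (\<Sum>l\<in>S. \<Sum>m\<in>S. (u m - u l) * (Bmat x c l m * ?P l m))"
    unfolding sum_distrib_left by (intro sum.cong refl) simp
  also have "\<dots> = 0"
    using sum_weighted_antisym_mat_pow_on_eq_0[OF _ Bmat_antisym] by (simp add: S_def)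
  finally show ?thesis unfolding S_def .
qed

end
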